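(* For any stable set $\Pi$ of forward-looking tree-profiles, the spi-logic $\mathsf{SPi}+\Sigma'_\Pi$, where $\Sigma'_\Pi=\{\iota'_\pi\mid\pi\in\Pi\}$, is complete.
   Context: Fix a non-empty signature $\mathcal R$. Sp-formulas: built from propositional variables and $\top$ with $\wedge$ and diamonds $\Diamond_R$ ($R\in\mathcal R$); sp-implications $\sigma\to\tau$. A SLO is an algebra $(A,\wedge,\top,\Diamond_R)_R$ with $(A,\wedge,\top)$ a meet-semilattice with top $\top$ and each $\Diamond_R$ monotone; it validates $\sigma\to\tau$ if $\sigma[\mathfrak a]\le\tau[\mathfrak a]$ for all valuations. Frames $\mathfrak F=(W,R^{\mathfrak F})_R$ with standard Kripke semantics. $\Sigma\models_{\mathsf{Kr}}\iota$ (resp. $\models_{\mathsf{SLO}}$): $\iota$ valid in all frames (resp. SLOs) validating $\Sigma$. The spi-logic $\mathsf{SPi}+\Sigma=\{\iota\mid\Sigma\models_{\mathsf{SLO}}\iota\}$ is complete if $\Sigma\models_{\mathsf{Kr}}\iota\iff\Sigma\models_{\mathsf{SLO}}\iota$ for all $\iota$. A homomorphism $h:\mathfrak F_1\to\mathfrak F_2$ of frames is a map with $(x,y)\in R^{\mathfrak F_1}\Rightarrow(h(x),h(y))\in R^{\mathfrak F_2}$ for all $R$. A frame is a tree if $(W,\bigcup_RR^{\mathfrak F})$ is a finite directed tree and the relations are pairwise disjoint. A profile $\pi=(\mathfrak G,S,u,v)$ consists of a finite rooted frame $\mathfrak G=(\Delta,R^{\mathfrak G})_R$, $u,v\in\Delta$,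 $S\in\mathcal R$ with $(u,v)\notin S^{\mathfrak G}$; it represents $\Phi_\pi=\forall\bar x\big(\bigwedge_{(x_i,x_j)\in R^{\mathfrak G}}R(x_i,x_j)\to S(u,v)\big)$ (universal closure over $\Delta$). It is a tree-profile if $\mathfrak G$ is a tree, and forward-looking if $u<_{\mathfrak G}v$, where $<_{\mathfrak G}$ is the transitive closure of $\bigcup_R R^{\mathfrak G}$. For a set $\Pi$ of profiles and a frame $\mathfrak F$, $\Pi(\mathfrak F)$ is the smallest frame on the same domain extending $\mathfrak F$ (relation-wise) that satisfies $\Phi_\pi$ for all $\pi\in\Pi$. $\Pi$ is stable if for every $\pi=(\mathfrak G,S,u,v)\in\Pi$ and every tree $\mathfrak T$, every homomorphism $\mathfrak G\to\Pi(\mathfrak T)$ is also a homomorphism $\mathfrak G\to\mathfrak T$. For a model $\mathfrak N=(\mathfrak F,\mathfrak v)$ over a finite frame with root $r$ and no directed cycles, where only finitely many variables are non-empty, define inductively $\mathrm{for}^{\mathfrak N}_w=\bigwedge_{w\in\mathfrak v(p)}p\wedge\bigwedge_{(w,v)\in R^{\mathfrak F},R\in\mathcal R}\Diamond_R\,\mathrm{for}^{\mathfrak N}_v$ (empty conjunction $=\top$) and $\mathrm{for}(\mathfrak N)=\mathrm{for}^{\mathfrak N}_r$. For a forward-looking tree-profile $\pi=(\mathfrak G,S,u,v)$ take a variable $p_x$ for each $x\in\Delta$, the valuation $\mathfrak v(p_x)=\{x\}$, $\mathfrak M=(\mathfrak G,\mathfrak v)$ and $\mathfrak M'=(\mathfrak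 G',\mathfrak v)$ where $\mathfrak G'$ equals $\mathfrak G$ except $S^{\mathfrak G'}=S^{\mathfrak G}\cup\{(u,v)\}$; then $\iota'_\pi=\big(\mathrm{for}(\mathfrak M)\to\mathrm{for}(\mathfrak M')\big)$. *)

theory Defs
  imports Main
begin

text \<open>Propositional variables are natural numbers; relation names have type 'r
  (any type, hence a non-empty signature).\<close>

datatype 'r spf = Var nat | Top | And "'r spf" "'r spf" | Dia 'r "'r spf"

type_synonym 'r spi = "'r spf \<times> 'r spf"   \<comment> \<open>(sigma, tau) stands for sigma \<rightarrow> tau\<close>

definition is_frame :: "'w set \<Rightarrow> ('r \<Rightarrow> ('w \<times> 'w) set) \<Rightarrow> bool" where
  "is_frame W R \<longleftrightarrow> (\<forall>r. R r \<subseteq> W \<times> W)"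

fun ksat :: "('r \<Rightarrow> ('w \<times> 'w) set) \<Rightarrow> (nat \<Rightarrow> 'w set) \<Rightarrow> 'w \<Rightarrow> 'r spf \<Rightarrow> bool" where
  "ksat R V w (Var p) = (w \<in> V p)"
| "ksat R V w Top = True"
| "ksat R V w (And a b) = (ksat R V w a \<and> ksat R V w b)"
| "ksat R V w (Dia r a) = (\<exists>v. (w, v) \<in> R r \<and> ksat R V v a)"

definition frame_valid :: "'w set \<Rightarrow> ('r \<Rightarrow> ('w \<times> 'w) set) \<Rightarrow> 'r spi \<Rightarrow> bool" where
  "frame_valid W R \<iota> \<longleftrightarrow>
     (\<forall>V. (\<forall>p. V p \<subseteq> W) \<longrightarrow> (\<forall>w\<in>W. ksat R V w (fst \<iota>) \<longrightarrow> ksat R V w (snd \<iota>)))"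

definition Kr_cons :: "'r spi set \<Rightarrow> 'r spi \<Rightarrow> 'w itself \<Rightarrow> bool" where
  "Kr_cons \<Sigma> \<iota> _ \<longleftrightarrow>
     (\<forall>(W::'w set) R. is_frame W R \<longrightarrow> (\<forall>s\<in>\<Sigma>. frame_valid W R s) \<longrightarrow> frame_valid W R \<iota>)"

text \<open>An SLO on a type 'a that is a meet-semilattice with top: a family D of
  monotone operators.\<close>

fun slo_eval :: "('r \<Rightarrow> 'a::{semilattice_inf,order_top} \<Rightarrow> 'a) \<Rightarrow> (nat \<Rightarrow> 'a) \<Rightarrow> 'r spf \<Rightarrow> 'a" where
  "slo_eval D a (Var p) = a p"
| "slo_eval D a Top = top"
| "slo_eval D a (And x y) = inf (slo_eval D a x) (slo_eval D a y)"
| "slo_eval D a (Dia r x) = D r (slo_eval D a x)"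

definition slo_valid :: "('r \<Rightarrow> 'a::{semilattice_inf,order_top} \<Rightarrow> 'a) \<Rightarrow> 'r spi \<Rightarrow> bool" where
  "slo_valid D \<iota> \<longleftrightarrow> (\<forall>a. slo_eval D a (fst \<iota>) \<le> slo_eval D a (snd \<iota>))"

definition SLO_cons :: "'r spi set \<Rightarrow> 'r spi \<Rightarrow> 'a::{semilattice_inf,order_top} itself \<Rightarrow> bool" where
  "SLO_cons \<Sigma> \<iota> _ \<longleftrightarrow>
     (\<forall>D :: 'r \<Rightarrow> 'a \<Rightarrow> 'a. (\<forall>r. mono (D r)) \<longrightarrow> (\<forall>s\<in>\<Sigma>. slo_valid D s) \<longrightarrow> slo_valid D \<iota>)"

text \<open>Since HOL cannot quantify over types inside a
  formula, completeness (for all frames and all SLOs of every size) is expressed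
  by the two nontrivial implications with universally quantified type variables:
  Kripke consequence over frames on subsets of nat already implies SLO consequence
  in every SLO of type 'a; and SLO consequence over SLOs on 'w set implies Kripke
  consequence over frames on 'w. Together (for all 'a, 'w) this is equivalent to
  the equivalence of Kripke consequence over all frames and SLO consequence over
  all SLOs.\<close>
definition spi_complete ::
  "'r spi set \<Rightarrow> 'a::{semilattice_inf,order_top} itself \<Rightarrow> 'w itself \<Rightarrow> bool" where
  "spi_complete \<Sigma> ta tw \<longleftrightarrow>
     (\<forall>\<iota>. Kr_cons \<Sigma> \<iota> TYPE(nat) \<longrightarrow> SLO_cons \<Sigma> \<iota> TYPE('a)) \<and>
     (\<forall>\<iota>. SLO_cons \<Sigma> \<iota> TYPE('w set) \<longrightarrow> Kr_cons \<Sigma> \<iota> TYPE('w))"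

definition edges :: "('r \<Rightarrow> ('w \<times> 'w) set) \<Rightarrow> ('w \<times> 'w) set" where
  "edges R = (\<Union>r. R r)"

definition is_hom ::
  "'v set \<Rightarrow> ('r \<Rightarrow> ('v \<times> 'v) set) \<Rightarrow> 'w set \<Rightarrow> ('r \<Rightarrow> ('w \<times> 'w) set) \<Rightarrow> ('v \<Rightarrow> 'w) \<Rightarrow> bool" where
  "is_hom W1 R1 W2 R2 h \<longleftrightarrow>
     (\<forall>x\<in>W1. h x \<in> W2) \<and> (\<forall>r x y. (x, y) \<in> R1 r \<longrightarrow> (h x, h y) \<in> R2 r)"

definition is_root :: "'w set \<Rightarrow> ('r \<Rightarrow> ('w \<times> 'w) set) \<Rightarrow> 'w \<Rightarrow> bool" where
  "is_root W R x \<longleftrightarrow> x \<in> W \<and> (\<forall>y\<in>W. (x, y) \<in> (edges R)\<^sup>*)"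

definition finite_rooted_frame :: "'w set \<Rightarrow> ('r \<Rightarrow> ('w \<times> 'w) set) \<Rightarrow> bool" where
  "finite_rooted_frame W R \<longleftrightarrow> finite W \<and> is_frame W R \<and> (\<exists>x. is_root W R x)"

definition is_tree :: "'w set \<Rightarrow> ('r \<Rightarrow> ('w \<times> 'w) set) \<Rightarrow> bool" where
  "is_tree W R \<longleftrightarrow> finite W \<and> is_frame W R \<and>
     (\<exists>x. is_root W R x \<and> (\<forall>y. (y, x) \<notin> edges R) \<and>
          (\<forall>z\<in>W. z \<noteq> x \<longrightarrow> (\<exists>!y. (y, z) \<in> edges R))) \<and>
     (\<forall>r s. r \<noteq> s \<longrightarrow> R r \<inter> R s = {})"

record 'r profile =
  pdom :: "nat set"
  prel :: "'r \<Rightarrow> (nat \<times> nat) set"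
  pS :: 'r
  pu :: nat
  pv :: nat

definition is_profile :: "'r profile \<Rightarrow> bool" where
  "is_profile \<pi> \<longleftrightarrow> finite_rooted_frame (pdom \<pi>) (prel \<pi>) \<and>
     pu \<pi> \<in> pdom \<pi> \<and> pv \<pi> \<in> pdom \<pi> \<and> (pu \<pi>, pv \<pi>) \<notin> prel \<pi> (pS \<pi>)"

definition tree_profile :: "'r profile \<Rightarrow> bool" where
  "tree_profile \<pi> \<longleftrightarrow> is_profile \<pi> \<and> is_tree (pdom \<pi>) (prel \<pi>)"

definition forward_looking :: "'r profile \<Rightarrow> bool" where
  "forward_looking \<pi> \<longleftrightarrow> (pu \<pi>, pv \<pi>) \<in> (edges (prel \<pi>))\<^sup>+"

definition sat_Phi :: "'r profile \<Rightarrow> 'w set \<Rightarrow> ('r \<Rightarrow> ('w \<times> 'w) set) \<Rightarrow> bool" where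
  "sat_Phi \<pi> W R \<longleftrightarrow>
     (\<forall>h. (\<forall>x\<in>pdom \<pi>. h x \<in> W) \<longrightarrow>
          (\<forall>r x y. (x, y) \<in> prel \<pi> r \<longrightarrow> (h x, h y) \<in> R r) \<longrightarrow>
          (h (pu \<pi>), h (pv \<pi>)) \<in> R (pS \<pi>))"

definition Pi_closure ::
  "'r profile set \<Rightarrow> 'w set \<Rightarrow> ('r \<Rightarrow> ('w \<times> 'w) set) \<Rightarrow> ('r \<Rightarrow> ('w \<times> 'w) set)" where
  "Pi_closure \<Pi> W R = (\<lambda>r. \<Inter>{R' r | R'. is_frame W R' \<and> (\<forall>s. R s \<subseteq> R' s) \<and>
                                          (\<forall>\<pi>\<in>\<Pi>. sat_Phi \<pi> W R')})"

definition stable :: "'r profile set \<Rightarrow> bool" where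
  "stable \<Pi> \<longleftrightarrow>
     (\<forall>\<pi>\<in>\<Pi>. \<forall>(W::nat set) R h. is_tree W R \<longrightarrow>
        is_hom (pdom \<pi>) (prel \<pi>) W (Pi_closure \<Pi> W R) h \<longrightarrow>
        is_hom (pdom \<pi>) (prel \<pi>) W R h)"

text \<open>A fixed enumeration of a finite set (the order of conjuncts is immaterial).\<close>
definition list_of :: "'a set \<Rightarrow> 'a list" where
  "list_of A = (SOME xs. distinct xs \<and> set xs = A)"

fun conj :: "'r spf list \<Rightarrow> 'r spf" where
  "conj [] = Top"
| "conj [x] = x"
| "conj (x # xs) = And x (conj xs)"

text \<open>for^N_w computed with fuel n (for an acyclic frame on W, fuel card W suffices).
  P is the finite set of variables with non-empty valuation.\<close>
fun for_at :: "nat \<Rightarrow> nat set \<Rightarrow> (nat \<Rightarrow> 'w set) \<Rightarrow> ('r \<Rightarrow> ('w \<times> 'w) set) \<Rightarrow> 'w \<Rightarrow> 'r spf" where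
  "for_at 0 P V R w = Top"
| "for_at (Suc n) P V R w =
     conj (map Var (list_of {p\<in>P. w \<in> V p}) @
           map (\<lambda>(r, v). Dia r (for_at n P V R v)) (list_of {(r, v). (w, v) \<in> R r}))"

definition for_model :: "'w set \<Rightarrow> ('r \<Rightarrow> ('w \<times> 'w) set) \<Rightarrow> nat set \<Rightarrow> (nat \<Rightarrow> 'w set) \<Rightarrow> 'w \<Rightarrow> 'r spf" where
  "for_model W R P V root = for_at (card W) P V R root"

definition root_of :: "'w set \<Rightarrow> ('r \<Rightarrow> ('w \<times> 'w) set) \<Rightarrow> 'w" where
  "root_of W R = (SOME x. is_root W R x)"

definition iota' :: "'r profile \<Rightarrow> 'r spi" where
  "iota' \<pi> =
    (let \<Delta> = pdom \<pi>; G = prel \<pi>;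
         G' = G(pS \<pi> := G (pS \<pi>) \<union> {(pu \<pi>, pv \<pi>)});
         V = (\<lambda>p. if p \<in> \<Delta> then {p} else {});
         r = root_of \<Delta> G
     in (for_model \<Delta> G \<Delta> V r, for_model \<Delta> G' \<Delta> V r))"

definition Sigma' :: "'r profile set \<Rightarrow> 'r spi set" where
  "Sigma' \<Pi> = iota' ` \<Pi>"

end

theory Submission
  imports Defs "HOL-Library.Countable"
begin

text \<open>
  Kripke consequence is implied by SLO consequence through complex algebras, once frame validity of
  \<open>\<iota>'\<^sub>\<pi>\<close> has been turned into the first-order condition \<open>\<Phi>\<^sub>\<pi>\<close>: this makes \<open>\<iota>'\<^sub>\<pi>\<close> hold at every
  world under every valuation, not only under valuations into the frame.

  Conversely, let \<open>\<sigma> \<rightarrow> \<tau>\<close> be a Kripke consequence of \<open>\<Sigma>'\<^sub>\<Pi>\<close> and unravel \<open>\<sigma>\<close> into its tree model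
  \<open>T\<^sub>\<sigma>\<close>. By stability, \<open>\<Pi>(T\<^sub>\<sigma>)\<close> is obtained by adding the edges \<open>h u \<rightarrow> h v\<close> for the homomorphisms
  \<open>h\<close> from profile frames into \<open>T\<^sub>\<sigma>\<close> itself; it validates \<open>\<Sigma>'\<^sub>\<Pi>\<close>, so \<open>\<tau>\<close> holds at its root, and
  hence already at the root of \<open>T\<^sub>\<sigma>\<close> enlarged by finitely many new edges. In an SLO validating
  \<open>\<Sigma>'\<^sub>\<Pi>\<close>, the greatest labelling of such a finite frame that is coherent with the SLO bounds the
  value of \<open>\<tau>\<close> from below at the root, and for \<open>T\<^sub>\<sigma>\<close> itself its root value dominates that of
  \<open>\<sigma>\<close>. Adding the new edges one at a time, shallowest source last, never lowers the root value:
  validity of \<open>\<iota>'\<^sub>\<pi>\<close> in the SLO yields a chain of values along the tree path from the root to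
  \<open>h u\<close> that can be patched into the labelling, making it coherent with the new edge.
\<close>

section \<open>Characteristic formulas and coherent labellings\<close>

lemma set_list_of: "finite A \<Longrightarrow> set (list_of A) = A"
  unfolding list_of_def by (metis (mono_tags, lifting) finite_distinct_list someI_ex)

lemma ksat_conj: "ksat R V w (conj xs) \<longleftrightarrow> (\<forall>\<phi>\<in>set xs. ksat R V w \<phi>)"
  by (induction xs rule: conj.induct) auto

lemma le_slo_eval_conj: "c \<le> slo_eval D a (conj xs) \<longleftrightarrow> (\<forall>\<phi>\<in>set xs. c \<le> slo_eval D a \<phi>)"
  by (induction xs rule: conj.induct) auto

definition succs :: "('r \<Rightarrow> ('w \<times> 'w) set) \<Rightarrow> 'w \<Rightarrow> ('r \<times> 'w) set" where
  "succs R x = {(r, y). (x, y) \<in> R r}"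

lemma set_for_at_Suc_conjuncts:
  assumes "finite P" "finite (succs R0 x)"
  shows "set (map Var (list_of {p\<in>P. x \<in> V0 p}) @
           map (\<lambda>(r, y). Dia r (for_at n P V0 R0 y)) (list_of {(r, y). (x, y) \<in> R0 r}))
    = Var ` {p\<in>P. x \<in> V0 p} \<union> (\<lambda>(r, y). Dia r (for_at n P V0 R0 y)) ` succs R0 x"
  using assms by (simp add: set_list_of succs_def)

lemma ksat_for_at_Suc:
  assumes "finite P" "finite (succs R0 x)"
  shows "ksat R V w (for_at (Suc n) P V0 R0 x) \<longleftrightarrow>
    (\<forall>p\<in>P. x \<in> V0 p \<longrightarrow> w \<in> V p) \<and>
    (\<forall>r y. (x, y) \<in> R0 r \<longrightarrow> (\<exists>w'. (w, w') \<in> R r \<and> ksat R V w' (for_at n P V0 R0 y)))"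
  unfolding for_at.simps ksat_conj set_for_at_Suc_conjuncts[OF assms]
  by (simp add: succs_def ball_Un; blast)

lemma le_slo_eval_for_at_Suc:
  assumes "finite P" "finite (succs R0 x)"
  shows "c \<le> slo_eval D a (for_at (Suc n) P V0 R0 x) \<longleftrightarrow>
    (\<forall>p\<in>P. x \<in> V0 p \<longrightarrow> c \<le> a p) \<and>
    (\<forall>r y. (x, y) \<in> R0 r \<longrightarrow> c \<le> D r (slo_eval D a (for_at n P V0 R0 y)))"
  unfolding for_at.simps le_slo_eval_conj set_for_at_Suc_conjuncts[OF assms]
  by (simp add: succs_def ball_Un; blast)

lemma ksat_for_at_hom:
  assumes "finite P" "\<And>x. finite (succs R0 x)"
    and "\<And>p x. p \<in> P \<Longrightarrow> x \<in> V0 p \<Longrightarrow> g x \<in> V p"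
    and "\<And>r x y. (x, y) \<in> R0 r \<Longrightarrow> (g x, g y) \<in> R r"
  shows "ksat R V (g x) (for_at n P V0 R0 x)"
proof (induction n arbitrary: x)
  case (Suc n)
  show ?case
    unfolding ksat_for_at_Suc[OF assms(1,2)] using assms(3,4) Suc by blast
qed simp

text \<open>The algebraic counterpart of a valuation-preserving homomorphism into the model \<open>(R, V)\<close>.\<close>

definition coherent ::
  "('r \<Rightarrow> 'a::order \<Rightarrow> 'a) \<Rightarrow> (nat \<Rightarrow> 'a) \<Rightarrow> nat set \<Rightarrow> (nat \<Rightarrow> 'w set) \<Rightarrow>
   ('r \<Rightarrow> ('w \<times> 'w) set) \<Rightarrow> ('w \<Rightarrow> 'a) \<Rightarrow> bool" where
  "coherent D a P V R c \<longleftrightarrow>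
     (\<forall>p\<in>P. \<forall>x\<in>V p. c x \<le> a p) \<and> (\<forall>r x y. (x, y) \<in> R r \<longrightarrow> c x \<le> D r (c y))"

lemma coherent_le_for_at:
  assumes "finite P" "\<And>x. finite (succs R0 x)" "\<forall>r. mono (D r)"
    and "coherent D a P V0 R0 c"
  shows "c x \<le> slo_eval D a (for_at n P V0 R0 x)"
proof (induction n arbitrary: x)
  case (Suc n)
  have "c x \<le> D r (slo_eval D a (for_at n P V0 R0 y))" if "(x, y) \<in> R0 r" for r y
  proof -
    have "c x \<le> D r (c y)" using assms(4) that unfolding coherent_def by blast
    also have "\<dots> \<le> D r (slo_eval D a (for_at n P V0 R0 y))"
      using assms(3) Suc.IH by (simp add: monoD)
    finally show ?thesis .
  qed
  then show ?case
    unfolding le_slo_eval_for_at_Suc[OF assms(1,2)] using assms(4) unfolding coherent_def by blast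
qed simp

lemma coherent_le_slo_eval:
  assumes "coherent D a UNIV V R c" "\<forall>r. mono (D r)"
  shows "ksat R V x \<phi> \<Longrightarrow> c x \<le> slo_eval D a \<phi>"
proof (induction \<phi> arbitrary: x)
  case (Var p)
  then show ?case
    using assms(1) unfolding coherent_def by simp
next
  case (Dia r \<phi>)
  then obtain y where y: "(x, y) \<in> R r" "ksat R V y \<phi>"
    by auto
  have "c x \<le> D r (c y)"
    using assms(1) y(1) unfolding coherent_def by blast
  also have "\<dots> \<le> D r (slo_eval D a \<phi>)"
    using Dia.IH[OF y(2)] assms(2) by (simp add: monoD)
  finally show ?case
    by simp
qed simp_all

lemma ksat_mono: "(\<And>r. R r \<subseteq> R' r) \<Longrightarrow> ksat R V w \<phi> \<Longrightarrow> ksat R' V w \<phi>"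
  by (induction \<phi> arbitrary: w) auto

fun dia_rels :: "'r spf \<Rightarrow> 'r set" where
  "dia_rels (Var p) = {}"
| "dia_rels Top = {}"
| "dia_rels (And \<phi> \<psi>) = dia_rels \<phi> \<union> dia_rels \<psi>"
| "dia_rels (Dia r \<phi>) = insert r (dia_rels \<phi>)"

lemma finite_dia_rels: "finite (dia_rels \<phi>)"
  by (induction \<phi>) auto

lemma ksat_cong: "(\<And>r. r \<in> dia_rels \<phi> \<Longrightarrow> R r = R' r) \<Longrightarrow> ksat R V w \<phi> = ksat R' V w \<phi>"
  by (induction \<phi> arbitrary: w) auto

lemma slo_eval_complex_algebra: "slo_eval (\<lambda>r X. {w. \<exists>v\<in>X. (w, v) \<in> R r}) V \<phi> = {w. ksat R V w \<phi>}"
  by (induction \<phi>) auto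

section \<open>Forward-looking tree profiles\<close>

locale fl_tree_profile =
  fixes \<pi> :: "'r profile"
  assumes is_tree_profile: "tree_profile \<pi>" and is_forward_looking: "forward_looking \<pi>"
begin

abbreviation "\<Delta> \<equiv> pdom \<pi>"
abbreviation "G \<equiv> prel \<pi>"
abbreviation "E \<equiv> edges G"
abbreviation "u \<equiv> pu \<pi>"
abbreviation "v \<equiv> pv \<pi>"
abbreviation "S \<equiv> pS \<pi>"

definition "V0 = (\<lambda>p. if p \<in> \<Delta> then {p} else ({} :: nat set))"
definition "G' = G(S := G S \<union> {(u, v)})"

lemma finite_\<Delta>: "finite \<Delta>"
  using is_tree_profile unfolding tree_profile_def is_tree_def by auto

lemma G_sub: "G r \<subseteq> \<Delta> \<times> \<Delta>"
  using is_tree_profile unfolding tree_profile_def is_tree_def is_frame_def by auto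

lemma E_iff: "(x, y) \<in> E \<longleftrightarrow> (\<exists>r. (x, y) \<in> G r)"
  unfolding edges_def by auto

lemma E_sub: "E \<subseteq> \<Delta> \<times> \<Delta>"
  using G_sub unfolding edges_def by auto

lemma G_label_unique: "(x, y) \<in> G r \<Longrightarrow> (x, y) \<in> G s \<Longrightarrow> r = s"
  using is_tree_profile unfolding tree_profile_def is_tree_def by blast

lemma uv: "u \<in> \<Delta>" "v \<in> \<Delta>" "(u, v) \<notin> G S"
  using is_tree_profile unfolding tree_profile_def is_profile_def by auto

lemma u_trancl_v: "(u, v) \<in> E\<^sup>+"
  using is_forward_looking unfolding forward_looking_def .

definition "root = root_of \<Delta> G"

lemma root:
  shows root_is_root: "is_root \<Delta> G root"
    and root_no_parent: "(y, root) \<notin> E"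
    and unique_parent: "z \<in> \<Delta> \<Longrightarrow> z \<noteq> root \<Longrightarrow> \<exists>!y. (y, z) \<in> E"
proof -
  obtain x where x: "is_root \<Delta> G x" "\<forall>y. (y, x) \<notin> E" "\<forall>z\<in>\<Delta>. z \<noteq> x \<longrightarrow> (\<exists>!y. (y, z) \<in> E)"
    using is_tree_profile unfolding tree_profile_def is_tree_def by blast
  have root: "is_root \<Delta> G root"
    unfolding root_def root_of_def using x(1) by (rule someI)
  then have "(root, x) \<in> E\<^sup>*"
    using x(1) unfolding is_root_def by auto
  then have "root = x"
    using x(2) by (cases rule: rtranclE) auto
  then show "is_root \<Delta> G root" "(y, root) \<notin> E" "z \<in> \<Delta> \<Longrightarrow> z \<noteq> root \<Longrightarrow> \<exists>!y. (y, z) \<in> E"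
    using x by auto
qed

lemma root_in: "root \<in> \<Delta>"
  using root_is_root unfolding is_root_def by auto

lemma reachable_from_root: "y \<in> \<Delta> \<Longrightarrow> (root, y) \<in> E\<^sup>*"
  using root_is_root unfolding is_root_def by auto

lemma root_no_ancestor: "(y, root) \<notin> E\<^sup>+"
  using root_no_parent by (metis tranclD2)

lemma parent_unique:
  assumes "(y, z) \<in> E" "(y', z) \<in> E"
  shows "y = y'"
proof -
  have "z \<in> \<Delta>" "z \<noteq> root"
    using assms E_sub root_no_parent by auto
  then show ?thesis
    using unique_parent assms by blast
qed

lemma E_acyclic: "(y, y) \<notin> E\<^sup>+"
proof
  assume cycle: "(y, y) \<in> E\<^sup>+"
  then have "y \<in> \<Delta>"
    using E_sub by (auto dest: tranclD)
  then have "(root, y) \<in> E\<^sup>*"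
    by (rule reachable_from_root)
  moreover have "(z, z) \<notin> E\<^sup>+" if "(root, z) \<in> E\<^sup>*" for z
    using that
  proof (induction rule: rtrancl_induct)
    case base
    show ?case using root_no_ancestor .
  next
    case (step y z)
    show ?case
    proof
      assume "(z, z) \<in> E\<^sup>+"
      then obtain y' where "(z, y') \<in> E\<^sup>*" "(y', z) \<in> E"
        by (metis tranclD2)
      moreover have "y' = y"
        using parent_unique \<open>(y', z) \<in> E\<close> step(2) by blast
      ultimately have "(y, y) \<in> E\<^sup>+"
        using step(2) by (metis rtrancl_into_trancl2)
      with step(3) show False ..
    qed
  qed
  ultimately show False
    using cycle by blast
qed

definition "ancestors y = {x. (x, y) \<in> E\<^sup>+}"
definition "depth y = card (ancestors y)"

lemma ancestors_sub: "ancestors y \<subseteq> \<Delta>"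
  unfolding ancestors_def using E_sub by (auto dest: tranclD)

lemma finite_ancestors: "finite (ancestors y)"
  using ancestors_sub finite_\<Delta> finite_subset by blast

lemma not_ancestor_self: "y \<notin> ancestors y"
  unfolding ancestors_def using E_acyclic by simp

lemma depth_less_card: "y \<in> \<Delta> \<Longrightarrow> depth y < card \<Delta>"
  unfolding depth_def using ancestors_sub not_ancestor_self finite_\<Delta>
  by (metis psubsetI psubset_card_mono)

lemma ancestors_child: "(y, z) \<in> E \<Longrightarrow> ancestors z = insert y (ancestors y)"
proof
  assume e: "(y, z) \<in> E"
  show "ancestors z \<subseteq> insert y (ancestors y)"
  proof
    fix x
    assume "x \<in> ancestors z"
    then obtain y' where x: "(x, y') \<in> E\<^sup>*" "(y', z) \<in> E"
      unfolding ancestors_def by (metis mem_Collect_eq tranclD2)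
    then have "(x, y) \<in> E\<^sup>*"
      using parent_unique e by blast
    then have "x = y \<or> (x, y) \<in> E\<^sup>+"
      by (auto dest: rtranclD)
    then show "x \<in> insert y (ancestors y)"
      unfolding ancestors_def by blast
  qed
  show "insert y (ancestors y) \<subseteq> ancestors z"
    using e unfolding ancestors_def by (auto intro: trancl_into_trancl)
qed

lemma depth_child: "(y, z) \<in> E \<Longrightarrow> depth z = Suc (depth y)"
  unfolding depth_def using ancestors_child finite_ancestors not_ancestor_self by simp

lemma depth_child_G: "(y, z) \<in> G r \<Longrightarrow> depth z = Suc (depth y)"
  using depth_child E_iff by blast

lemma depth_root: "depth root = 0"
  unfolding depth_def ancestors_def using root_no_ancestor by simp

lemma depth_eq_0: "y \<in> \<Delta> \<Longrightarrow> depth y = 0 \<Longrightarrow> y = root"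
proof (rule ccontr)
  assume y: "y \<in> \<Delta>" "depth y = 0" "y \<noteq> root"
  then have "(root, y) \<in> E\<^sup>+"
    using reachable_from_root by (metis rtranclD)
  then have "root \<in> ancestors y"
    unfolding ancestors_def by simp
  then show False
    using y(2) finite_ancestors unfolding depth_def by auto
qed

lemma depth_trancl: "(y, z) \<in> E\<^sup>+ \<Longrightarrow> depth y < depth z"
  by (induction rule: trancl_induct) (simp_all add: depth_child)

lemma finite_succs_G: "finite (succs G x)"
proof -
  have "inj_on snd (succs G x)"
    unfolding succs_def inj_on_def using G_label_unique by auto
  moreover have "snd ` succs G x \<subseteq> \<Delta>"
    unfolding succs_def using G_sub by fastforce
  ultimately show ?thesis
    using finite_\<Delta> by (meson finite_imageD finite_subset)
qed

lemma finite_succs_G': "finite (succs G' x)"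
proof -
  have "succs G' x \<subseteq> insert (S, v) (succs G x)"
    unfolding succs_def G'_def by (auto split: if_splits)
  then show ?thesis
    using finite_succs_G finite_subset by blast
qed

lemma G_sub_G': "G r \<subseteq> G' r"
  unfolding G'_def by auto

lemma uv_G': "(u, v) \<in> G' S"
  unfolding G'_def by simp

lemma root_has_child: "\<exists>y r. (root, y) \<in> G r"
proof -
  have "(root, v) \<in> E\<^sup>+"
    using reachable_from_root[OF uv(1)] u_trancl_v by (rule rtrancl_trancl_trancl)
  then show ?thesis
    using E_iff by (metis tranclD)
qed

lemma path_to_u:
  obtains k f rs where "f 0 = root" "f k = u" "\<forall>i<k. (f i, f (Suc i)) \<in> G (rs i)"
    "\<forall>i\<le>k. f i \<in> \<Delta>"
proof -
  obtain k where "(root, u) \<in> E ^^ k"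
    using reachable_from_root[OF uv(1)] rtrancl_power by blast
  then obtain f where f: "f 0 = root" "f k = u" "\<forall>i<k. (f i, f (Suc i)) \<in> E"
    using relpow_fun_conv by metis
  then obtain rs where "\<forall>i<k. (f i, f (Suc i)) \<in> G (rs i)"
    unfolding E_iff by metis
  moreover have "f i \<in> \<Delta>" if "i \<le> k" for i
  proof (cases i)
    case 0
    then show ?thesis using f(1) root_in by simp
  next
    case (Suc j)
    then have "(f j, f i) \<in> E"
      using f(3) that by auto
    then show ?thesis
      using E_sub by auto
  qed
  ultimately show ?thesis
    using that f by blast
qed

definition "node_formula R' x = for_at (card \<Delta> - depth x) \<Delta> V0 R' x"

lemma iota'_eq: "iota' \<pi> = (node_formula G root, node_formula G' root)"
  unfolding iota'_def Let_def for_model_def node_formula_def root_def[symmetric] depth_root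
    V0_def G'_def by simp

lemma node_formula_child:
  assumes "(x, y) \<in> G r"
  shows "for_at (card \<Delta> - Suc (depth x)) \<Delta> V0 R' y = node_formula R' y"
  using depth_child_G[OF assms] by (simp add: node_formula_def)

lemma fuel_Suc: "x \<in> \<Delta> \<Longrightarrow> card \<Delta> - depth x = Suc (card \<Delta> - Suc (depth x))"
  using depth_less_card by (simp add: Suc_diff_Suc)

lemma fuel_below_u: "card \<Delta> - Suc (depth u) = Suc (card \<Delta> - Suc (Suc (depth u)))"
  using depth_trancl[OF u_trancl_v] depth_less_card[OF uv(2)] by simp

lemma ksat_node_formula:
  assumes "x \<in> \<Delta>" "finite (succs R' x)"
  shows "ksat R V w (node_formula R' x) \<longleftrightarrow> w \<in> V x \<and>
    (\<forall>r y. (x, y) \<in> R' r \<longrightarrow>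
       (\<exists>w'. (w, w') \<in> R r \<and> ksat R V w' (for_at (card \<Delta> - Suc (depth x)) \<Delta> V0 R' y)))"
  unfolding node_formula_def fuel_Suc[OF assms(1)] ksat_for_at_Suc[OF finite_\<Delta> assms(2)]
  using assms(1) by (auto simp: V0_def)

lemma le_slo_eval_node_formula:
  assumes "x \<in> \<Delta>" "finite (succs R' x)"
  shows "c \<le> slo_eval D b (node_formula R' x) \<longleftrightarrow> c \<le> b x \<and>
    (\<forall>r y. (x, y) \<in> R' r \<longrightarrow>
       c \<le> D r (slo_eval D b (for_at (card \<Delta> - Suc (depth x)) \<Delta> V0 R' y)))"
  unfolding node_formula_def fuel_Suc[OF assms(1)] le_slo_eval_for_at_Suc[OF finite_\<Delta> assms(2)]
  using assms(1) by (auto simp: V0_def)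

lemma ksat_node_formula_child:
  assumes "(x, y) \<in> G r" "G r \<subseteq> R' r" "finite (succs R' x)" "ksat R V w (node_formula R' x)"
  shows "\<exists>w'. (w, w') \<in> R r \<and> ksat R V w' (node_formula R' y)"
proof -
  have "x \<in> \<Delta>"
    using assms(1) G_sub by blast
  then obtain w' where "(w, w') \<in> R r" "ksat R V w' (for_at (card \<Delta> - Suc (depth x)) \<Delta> V0 R' y)"
    using assms unfolding ksat_node_formula[OF \<open>x \<in> \<Delta>\<close> assms(3)] by blast
  then show ?thesis
    unfolding node_formula_child[OF assms(1)] by blast
qed

lemma le_slo_eval_node_formula_child:
  assumes "(x, y) \<in> G r" "G r \<subseteq> R' r" "finite (succs R' x)"
  shows "slo_eval D b (node_formula R' x) \<le> D r (slo_eval D b (node_formula R' y))"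
proof -
  have "x \<in> \<Delta>"
    using assms(1) G_sub by blast
  then have "\<forall>r y. (x, y) \<in> R' r \<longrightarrow> slo_eval D b (node_formula R' x) \<le>
      D r (slo_eval D b (for_at (card \<Delta> - Suc (depth x)) \<Delta> V0 R' y))"
    using le_slo_eval_node_formula[OF \<open>x \<in> \<Delta>\<close> assms(3), THEN iffD1, OF order_refl] by blast
  then have "slo_eval D b (node_formula R' x) \<le>
      D r (slo_eval D b (for_at (card \<Delta> - Suc (depth x)) \<Delta> V0 R' y))"
    using assms(1,2) by blast
  then show ?thesis
    unfolding node_formula_child[OF assms(1)] .
qed

text \<open>The extra edge \<open>(u, v)\<close> of \<open>G'\<close> is not a tree edge, so the formula below it is cut off at the
  fuel of \<open>u\<close>; this fuel is still positive because \<open>u\<close> is a proper ancestor of \<open>v\<close>.\<close>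

lemma ksat_node_formula_G'_u:
  assumes "ksat R V w (node_formula G' u)"
  shows "\<exists>w'. (w, w') \<in> R S \<and> w' \<in> V v"
proof -
  obtain w' where "(w, w') \<in> R S"
      "ksat R V w' (for_at (Suc (card \<Delta> - Suc (Suc (depth u)))) \<Delta> V0 G' v)"
    using assms uv_G' unfolding ksat_node_formula[OF uv(1) finite_succs_G'] fuel_below_u by blast
  then show ?thesis
    unfolding ksat_for_at_Suc[OF finite_\<Delta> finite_succs_G'] using uv(2) by (auto simp: V0_def)
qed

lemma slo_eval_node_formula_G'_u:
  assumes "mono (D S)"
  shows "slo_eval D b (node_formula G' u) \<le> D S (b v)"
proof -
  let ?\<phi> = "for_at (Suc (card \<Delta> - Suc (Suc (depth u)))) \<Delta> V0 G' v"
  have "slo_eval D b (node_formula G' u) \<le> D S (slo_eval D b ?\<phi>)"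
    using le_slo_eval_node_formula[OF uv(1) finite_succs_G', of _ D b] uv_G'
    unfolding fuel_below_u by blast
  moreover have "slo_eval D b ?\<phi> \<le> b v"
    using order_refl[of "slo_eval D b ?\<phi>"] uv(2)
    unfolding le_slo_eval_for_at_Suc[OF finite_\<Delta> finite_succs_G'] by (auto simp: V0_def)
  ultimately show ?thesis
    using assms by (meson monoD order_trans)
qed

definition "parent y = (THE x. (x, y) \<in> E)"
definition "parent_rel y = (THE r. (parent y, y) \<in> G r)"

lemma parent_eq:
  assumes "(x, y) \<in> G r"
  shows "parent y = x" "parent_rel y = r"
proof -
  have "(x, y) \<in> E"
    using assms E_iff by blast
  then show "parent y = x"
    unfolding parent_def using parent_unique by blast
  then show "parent_rel y = r"
    unfolding parent_rel_def using assms G_label_unique by blast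
qed

context
  fixes R :: "'r \<Rightarrow> ('w \<times> 'w) set" and V :: "nat \<Rightarrow> 'w set" and w :: 'w
    and R' :: "'r \<Rightarrow> (nat \<times> nat) set"
  assumes G_sub_R': "\<And>r. G r \<subseteq> R' r" and finite_succs_R': "\<And>x. finite (succs R' x)"
    and ksat_root: "ksat R V w (node_formula R' root)"
begin

text \<open>A homomorphism witnessing the formula at the root, built level by level: each node is sent
  to a successor of its parent's image that satisfies the node's formula.\<close>

definition "level_witness = rec_nat (\<lambda>_. w) (\<lambda>k g y. SOME w'.
  (g (parent y), w') \<in> R (parent_rel y) \<and> ksat R V w' (node_formula R' y))"

definition "witness y = level_witness (depth y) y"

lemma witness_root: "witness root = w"
  unfolding witness_def level_witness_def depth_root by simp

lemma witness_child:
  assumes xy: "(x, y) \<in> G r" and sat: "ksat R V (witness x) (node_formula R' x)"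
  shows "(witness x, witness y) \<in> R r \<and> ksat R V (witness y) (node_formula R' y)"
proof -
  have "depth y = Suc (depth x)"
    using depth_child_G[OF xy] .
  then have eq: "witness y = (SOME w'. (witness x, w') \<in> R r \<and> ksat R V w' (node_formula R' y))"
    unfolding witness_def level_witness_def using parent_eq[OF xy] by simp
  have "\<exists>w'. (witness x, w') \<in> R r \<and> ksat R V w' (node_formula R' y)"
    using ksat_node_formula_child[OF xy G_sub_R' finite_succs_R' sat] .
  from someI_ex[OF this] show ?thesis
    unfolding eq[symmetric] .
qed

lemma ksat_witness: "x \<in> \<Delta> \<Longrightarrow> ksat R V (witness x) (node_formula R' x)"
proof (induction "depth x" arbitrary: x)
  case 0
  then show ?case
    using depth_eq_0 witness_root ksat_root by simp
next
  case (Suc k)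
  then have "x \<noteq> root"
    using depth_root by auto
  then obtain p r where p: "(p, x) \<in> G r"
    using unique_parent[OF Suc.prems] E_iff by blast
  then have "p \<in> \<Delta>" "depth p = k"
    using G_sub depth_child_G Suc.hyps(2) by auto
  then show ?case
    using Suc.hyps(1) witness_child p by blast
qed

lemma hom_of_ksat_node_formula:
  obtains g where "g root = w" "\<And>r x y. (x, y) \<in> G r \<Longrightarrow> (g x, g y) \<in> R r"
    "\<And>x. x \<in> \<Delta> \<Longrightarrow> ksat R V (g x) (node_formula R' x)"
proof
  show "witness root = w"
    by (rule witness_root)
  show "(witness x, witness y) \<in> R r" if "(x, y) \<in> G r" for r x y
    using that witness_child ksat_witness G_sub by blast
qed (rule ksat_witness)

end

lemma hom_in_frame:
  assumes "is_frame W R" "\<And>r x y. (x, y) \<in> G r \<Longrightarrow> (g x, g y) \<in> R r" "x \<in> \<Delta>"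
  shows "g x \<in> W"
proof (cases "x = root")
  case True
  then obtain y r where "(x, y) \<in> G r"
    using root_has_child by blast
  then show ?thesis
    using assms(1,2) unfolding is_frame_def by blast
next
  case False
  then obtain p r where "(p, x) \<in> G r"
    using unique_parent[OF assms(3)] E_iff by blast
  then show ?thesis
    using assms(1,2) unfolding is_frame_def by blast
qed

lemma ksat_snd_iota'_of_sat_Phi:
  assumes "sat_Phi \<pi> W R" "is_frame W R" "ksat R V w (fst (iota' \<pi>))"
  shows "ksat R V w (snd (iota' \<pi>))"
proof -
  have "ksat R V w (node_formula G root)"
    using assms(3) unfolding iota'_eq by simp
  then obtain g where g: "g root = w" "\<And>r x y. (x, y) \<in> G r \<Longrightarrow> (g x, g y) \<in> R r"
      "\<And>x. x \<in> \<Delta> \<Longrightarrow> ksat R V (g x) (node_formula G x)"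
    by (rule hom_of_ksat_node_formula[OF order_refl finite_succs_G]) blast
  have gV: "g x \<in> V x" if "x \<in> \<Delta>" for x
    using g(3)[OF that] unfolding ksat_node_formula[OF that finite_succs_G] by blast
  have "(g u, g v) \<in> R S"
    using assms(1) hom_in_frame[where g = g, OF assms(2) g(2)] g(2) unfolding sat_Phi_def by blast
  then have hom_G': "(g x, g y) \<in> R r" if "(x, y) \<in> G' r" for r x y
    using that g(2) unfolding G'_def by (auto split: if_splits)
  have "ksat R V (g root) (node_formula G' root)"
    unfolding node_formula_def
    by (rule ksat_for_at_hom[OF finite_\<Delta> finite_succs_G']) (auto simp: V0_def intro: gV hom_G')
  then show ?thesis
    using g(1) iota'_eq by simp
qed

lemma sat_Phi_of_frame_valid:
  assumes "frame_valid W R (iota' \<pi>)"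
  shows "sat_Phi \<pi> W R"
  unfolding sat_Phi_def
proof (intro allI impI)
  fix h
  assume hW: "\<forall>x\<in>\<Delta>. h x \<in> W" and hG: "\<forall>r x y. (x, y) \<in> G r \<longrightarrow> (h x, h y) \<in> R r"
  define V where "V p = (if p \<in> \<Delta> then {h p} else {})" for p
  have "\<forall>p. V p \<subseteq> W" "h root \<in> W"
    unfolding V_def using hW root_in by auto
  moreover have "ksat R V (h root) (node_formula G root)"
    unfolding node_formula_def
    by (rule ksat_for_at_hom[OF finite_\<Delta> finite_succs_G]) (use hG in \<open>auto simp: V_def V0_def\<close>)
  ultimately have "ksat R V (h root) (node_formula G' root)"
    using assms unfolding frame_valid_def iota'_eq by auto
  then obtain g where "\<And>x. x \<in> \<Delta> \<Longrightarrow> ksat R V (g x) (node_formula G' x)"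
    by (rule hom_of_ksat_node_formula[OF G_sub_G' finite_succs_G']) blast
  then have sat_u: "ksat R V (g u) (node_formula G' u)"
    using uv(1) by blast
  then have "g u = h u"
    unfolding ksat_node_formula[OF uv(1) finite_succs_G'] using uv(1) by (simp add: V_def)
  moreover obtain w' where "(g u, w') \<in> R S" "w' \<in> V v"
    using ksat_node_formula_G'_u[OF sat_u] by blast
  ultimately show "(h u, h v) \<in> R S"
    using uv(2) by (simp add: V_def)
qed

lemma path_labelling_of_slo_valid:
  fixes D :: "'r \<Rightarrow> 'a::{semilattice_inf,order_top} \<Rightarrow> 'a" and b :: "nat \<Rightarrow> 'a"
  assumes mono: "\<forall>r. mono (D r)" and valid: "slo_valid D (iota' \<pi>)"
    and coh: "\<And>r x y. (x, y) \<in> G r \<Longrightarrow> b x \<le> D r (b y)"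
  obtains k f rs m where "f 0 = root" "f k = u" "\<forall>i<k. (f i, f (Suc i)) \<in> G (rs i)"
    "b root \<le> m 0" "\<forall>i\<le>k. m i \<le> b (f i)" "\<forall>i<k. m i \<le> D (rs i) (m (Suc i))" "m k \<le> D S (b v)"
proof -
  obtain k f rs where f: "f 0 = root" "f k = u" "\<forall>i<k. (f i, f (Suc i)) \<in> G (rs i)"
      "\<forall>i\<le>k. f i \<in> \<Delta>"
    by (rule path_to_u)
  define m where "m i = slo_eval D b (node_formula G' (f i))" for i
  have "b root \<le> slo_eval D b (node_formula G root)"
    unfolding node_formula_def
    by (rule coherent_le_for_at[OF finite_\<Delta> finite_succs_G mono])
      (use coh in \<open>auto simp: coherent_def V0_def\<close>)
  also have "\<dots> \<le> m 0"
    using valid f(1) unfolding m_def slo_valid_def iota'_eq by simp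
  finally have "b root \<le> m 0" .
  moreover have "m i \<le> b (f i)" if "i \<le> k" for i
    using le_slo_eval_node_formula[OF f(4)[rule_format, OF that] finite_succs_G', of "m i" D b]
    unfolding m_def by simp
  moreover have "m i \<le> D (rs i) (m (Suc i))" if "i < k" for i
    unfolding m_def using le_slo_eval_node_formula_child f(3) that G_sub_G' finite_succs_G' by blast
  moreover have "m k \<le> D S (b v)"
    unfolding m_def f(2) using slo_eval_node_formula_G'_u mono by blast
  ultimately show ?thesis
    using that f(1-3) by blast
qed

end

section \<open>The tree model of a formula\<close>

fun top_vars :: "'r spf \<Rightarrow> nat set" where
  "top_vars (Var p) = {p}"
| "top_vars Top = {}"
| "top_vars (And \<phi> \<psi>) = top_vars \<phi> \<union> top_vars \<psi>"
| "top_vars (Dia r \<phi>) = {}"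

fun top_dias :: "'r spf \<Rightarrow> ('r \<times> 'r spf) list" where
  "top_dias (Var p) = []"
| "top_dias Top = []"
| "top_dias (And \<phi> \<psi>) = top_dias \<phi> @ top_dias \<psi>"
| "top_dias (Dia r \<phi>) = [(r, \<phi>)]"

fun subformula_at :: "'r spf \<Rightarrow> nat list \<Rightarrow> 'r spf" where
  "subformula_at \<phi> [] = \<phi>"
| "subformula_at \<phi> (i # is) = subformula_at (snd (top_dias \<phi> ! i)) is"

fun is_position :: "'r spf \<Rightarrow> nat list \<Rightarrow> bool" where
  "is_position \<phi> [] = True"
| "is_position \<phi> (i # is) \<longleftrightarrow> i < length (top_dias \<phi>) \<and> is_position (snd (top_dias \<phi> ! i)) is"

lemma slo_eval_le_top_var: "q \<in> top_vars \<phi> \<Longrightarrow> slo_eval D a \<phi> \<le> a q"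
  by (induction \<phi>) (auto intro: le_infI1 le_infI2)

lemma slo_eval_le_top_dia: "(r, \<psi>) \<in> set (top_dias \<phi>) \<Longrightarrow> slo_eval D a \<phi> \<le> D r (slo_eval D a \<psi>)"
  by (induction \<phi>) (auto intro: le_infI1 le_infI2)

lemma ksat_of_top:
  "(\<forall>q\<in>top_vars \<phi>. w \<in> V q) \<Longrightarrow>
   (\<forall>(r, \<psi>)\<in>set (top_dias \<phi>). \<exists>w'. (w, w') \<in> R r \<and> ksat R V w' \<psi>) \<Longrightarrow> ksat R V w \<phi>"
  by (induction \<phi>) auto

lemma size_top_dia: "(r, \<psi>) \<in> set (top_dias \<phi>) \<Longrightarrow> size \<psi> < size \<phi>"
  by (induction \<phi>) auto

lemma finite_top_vars: "finite (top_vars \<phi>)"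
  by (induction \<phi>) auto

lemma subformula_at_snoc: "subformula_at \<phi> (p @ [i]) = snd (top_dias (subformula_at \<phi> p) ! i)"
  by (induction p arbitrary: \<phi>) auto

lemma is_position_snoc:
  "is_position \<phi> (p @ [i]) \<longleftrightarrow> is_position \<phi> p \<and> i < length (top_dias (subformula_at \<phi> p))"
  by (induction p arbitrary: \<phi>) auto

lemma finite_positions: "finite {p. is_position \<phi> p}"
proof (induction \<phi> rule: measure_induct_rule[of size])
  case (less \<phi>)
  have "{p. is_position \<phi> p} =
      insert [] (\<Union>i<length (top_dias \<phi>). Cons i ` {q. is_position (snd (top_dias \<phi> ! i)) q})"
  proof -
    have "is_position \<phi> p \<longleftrightarrow>
        p = [] \<or> (\<exists>i<length (top_dias \<phi>). \<exists>q. p = i # q \<and> is_position (snd (top_dias \<phi> ! i)) q)"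
      for p by (cases p) auto
    then show ?thesis
      by auto
  qed
  moreover have "finite {q. is_position (snd (top_dias \<phi> ! i)) q}" if "i < length (top_dias \<phi>)" for i
    using that size_top_dia[of "fst (top_dias \<phi> ! i)" "snd (top_dias \<phi> ! i)" \<phi>] less by simp
  ultimately show ?case
    by simp
qed

locale syntax_tree =
  fixes \<sigma> :: "'r spf"
begin

text \<open>The nodes of \<open>T\<^sub>\<sigma>\<close> are the positions of diamond subformulas of \<open>\<sigma>\<close>, encoded as natural
  numbers because stability only speaks about trees on \<open>nat\<close>.\<close>

definition enc :: "nat list \<Rightarrow> nat" where
  "enc p = to_nat p"

definition "TW = enc ` {p. is_position \<sigma> p}"
definition "TR r = {(enc p, enc (p @ [i])) | p i.
  is_position \<sigma> (p @ [i]) \<and> fst (top_dias (subformula_at \<sigma> p) ! i) = r}"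
definition "TV q = {enc p | p. is_position \<sigma> p \<and> q \<in> top_vars (subformula_at \<sigma> p)}"
definition "\<rho> = enc []"
definition "level x = length (from_nat x :: nat list)"

lemma enc_inj [simp]: "enc p = enc q \<longleftrightarrow> p = q"
  unfolding enc_def by simp

lemma level_enc [simp]: "level (enc p) = length p"
  unfolding level_def enc_def by simp

lemma TR_iff: "(x, y) \<in> TR r \<longleftrightarrow> (\<exists>p i. x = enc p \<and> y = enc (p @ [i]) \<and>
    is_position \<sigma> (p @ [i]) \<and> fst (top_dias (subformula_at \<sigma> p) ! i) = r)"
  unfolding TR_def by blast

lemma TR_level: "(x, y) \<in> TR r \<Longrightarrow> level y = Suc (level x)"
  unfolding TR_iff by auto

lemma TR_parent_unique: "(x, y) \<in> TR r \<Longrightarrow> (x', y) \<in> TR r' \<Longrightarrow> x = x' \<and> r = r'"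
  unfolding TR_iff by auto

lemma finite_TW: "finite TW"
  unfolding TW_def using finite_positions by blast

lemma TR_sub: "TR r \<subseteq> TW \<times> TW"
  unfolding TR_def TW_def using is_position_snoc by fastforce

lemma TV_sub: "TV q \<subseteq> TW"
  unfolding TV_def TW_def by auto

lemma finite_succs_TR: "finite (succs TR x)"
proof -
  have "inj_on snd (succs TR x)"
    unfolding succs_def inj_on_def using TR_parent_unique by auto
  moreover have "snd ` succs TR x \<subseteq> TW"
    unfolding succs_def using TR_sub by fastforce
  ultimately show ?thesis
    using finite_TW by (meson finite_imageD finite_subset)
qed

lemma finite_TV_at: "finite {q. x \<in> TV q}"
proof -
  have "{q. x \<in> TV q} \<subseteq> (\<Union>p\<in>{p. is_position \<sigma> p}. top_vars (subformula_at \<sigma> p))"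
    unfolding TV_def by auto
  then show ?thesis
    using finite_positions finite_top_vars by (meson finite_UN_I finite_subset)
qed

lemma reachable_from_\<rho>: "is_position \<sigma> p \<Longrightarrow> (\<rho>, enc p) \<in> (edges TR)\<^sup>*"
proof (induction p rule: rev_induct)
  case Nil
  then show ?case
    unfolding \<rho>_def by simp
next
  case (snoc i p)
  then have "(enc p, enc (p @ [i])) \<in> edges TR"
    unfolding edges_def TR_def by blast
  moreover have "(\<rho>, enc p) \<in> (edges TR)\<^sup>*"
    using snoc is_position_snoc by blast
  ultimately show ?case
    by simp
qed

lemma unique_parent_TR:
  assumes "z \<in> TW" "z \<noteq> \<rho>"
  shows "\<exists>!y. (y, z) \<in> edges TR"
proof -
  obtain q where q: "is_position \<sigma> q" "z = enc q" "q \<noteq> []"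
    using assms unfolding TW_def \<rho>_def by blast
  then have "is_position \<sigma> (butlast q @ [last q])" "z = enc (butlast q @ [last q])"
    by simp_all
  then have "(enc (butlast q), z) \<in> edges TR"
    unfolding edges_def TR_def by blast
  moreover have "y = enc (butlast q)" if yz: "(y, z) \<in> edges TR" for y
  proof -
    obtain r where "(y, z) \<in> TR r"
      using yz unfolding edges_def by blast
    then obtain p i where "y = enc p" "z = enc (p @ [i])"
      unfolding TR_iff by blast
    then show ?thesis
      using q(2) by simp
  qed
  ultimately show ?thesis
    by blast
qed

lemma is_tree_T: "is_tree TW TR"
  unfolding is_tree_def
proof (intro conjI exI)
  show "finite TW"
    by (rule finite_TW)
  show "is_frame TW TR"
    unfolding is_frame_def using TR_sub by blast
  show "\<forall>r s. r \<noteq> s \<longrightarrow> TR r \<inter> TR s = {}"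
    using TR_parent_unique by fast
  show "is_root TW TR \<rho>"
    unfolding is_root_def TW_def \<rho>_def using reachable_from_\<rho> \<rho>_def by auto
  show "\<forall>y. (y, \<rho>) \<notin> edges TR"
    by (auto simp: edges_def TR_iff \<rho>_def)
  show "\<forall>z\<in>TW. z \<noteq> \<rho> \<longrightarrow> (\<exists>!y. (y, z) \<in> edges TR)"
    using unique_parent_TR by blast
qed

lemma ksat_subformula_at: "is_position \<sigma> p \<Longrightarrow> ksat TR TV (enc p) (subformula_at \<sigma> p)"
proof (induction "size (subformula_at \<sigma> p)" arbitrary: p rule: less_induct)
  case less
  show ?case
  proof (rule ksat_of_top)
    show "\<forall>q\<in>top_vars (subformula_at \<sigma> p). enc p \<in> TV q"
      unfolding TV_def using less.prems by blast
    show "\<forall>(r, \<psi>)\<in>set (top_dias (subformula_at \<sigma> p)). \<exists>w'. (enc p, w') \<in> TR r \<and> ksat TR TV w' \<psi>"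
    proof clarify
      fix r \<psi>
      assume "(r, \<psi>) \<in> set (top_dias (subformula_at \<sigma> p))"
      then obtain i where i: "i < length (top_dias (subformula_at \<sigma> p))"
          "top_dias (subformula_at \<sigma> p) ! i = (r, \<psi>)"
        by (metis in_set_conv_nth)
      then have pos: "is_position \<sigma> (p @ [i])" and sub: "subformula_at \<sigma> (p @ [i]) = \<psi>"
        using less.prems by (simp_all add: is_position_snoc subformula_at_snoc)
      have "size \<psi> < size (subformula_at \<sigma> p)"
        using size_top_dia i by (metis nth_mem)
      then have "ksat TR TV (enc (p @ [i])) \<psi>"
        using less.hyps pos sub by blast
      moreover have "(enc p, enc (p @ [i])) \<in> TR r"
        unfolding TR_def using pos i by force
      ultimately show "\<exists>w'. (enc p, w') \<in> TR r \<and> ksat TR TV w' \<psi>"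
        by blast
    qed
  qed
qed

lemma ksat_\<rho>: "ksat TR TV \<rho> \<sigma>"
  using ksat_subformula_at[of "[]"] unfolding \<rho>_def by simp

definition "subformula_value D a x = slo_eval D a (subformula_at \<sigma> (from_nat x))"

lemma subformula_value_\<rho>: "subformula_value D a \<rho> = slo_eval D a \<sigma>"
  unfolding subformula_value_def \<rho>_def enc_def by simp

lemma coherent_subformula_value: "coherent D a UNIV TV TR (subformula_value D a)"
  unfolding coherent_def
proof (intro conjI allI ballI impI)
  fix q x
  assume "x \<in> TV q"
  then obtain p where "x = enc p" "q \<in> top_vars (subformula_at \<sigma> p)"
    unfolding TV_def by blast
  then show "subformula_value D a x \<le> a q"
    unfolding subformula_value_def enc_def using slo_eval_le_top_var by simp
next
  fix r x y
  assume "(x, y) \<in> TR r"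
  then obtain p i where pi: "x = enc p" "y = enc (p @ [i])" "is_position \<sigma> (p @ [i])"
      "fst (top_dias (subformula_at \<sigma> p) ! i) = r"
    unfolding TR_iff by blast
  then have "(r, subformula_at \<sigma> (p @ [i])) \<in> set (top_dias (subformula_at \<sigma> p))"
    using is_position_snoc subformula_at_snoc by (metis nth_mem prod.collapse)
  then show "subformula_value D a x \<le> D r (subformula_value D a y)"
    unfolding subformula_value_def enc_def pi using slo_eval_le_top_dia by simp
qed

text \<open>The greatest labelling coherent with \<open>(E, TV)\<close>. It is computed with fuel; the fuel
  \<open>height - level x\<close> suffices since the edges of a layered frame increase the level.\<close>

fun greatest_lab_fuel ::
  "('r \<Rightarrow> 'a::{semilattice_inf,order_top} \<Rightarrow> 'a) \<Rightarrow> (nat \<Rightarrow> 'a) \<Rightarrow> ('r \<Rightarrow> (nat \<times> nat) set) \<Rightarrow>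
   nat \<Rightarrow> nat \<Rightarrow> 'a" where
  "greatest_lab_fuel D a E 0 x = top"
| "greatest_lab_fuel D a E (Suc n) x = Inf_fin (insert top
     (a ` {q. x \<in> TV q} \<union> (\<lambda>(r, y). D r (greatest_lab_fuel D a E n y)) ` succs E x))"

definition "height = Suc (Max (level ` TW))"

definition "greatest_lab D a E x = greatest_lab_fuel D a E (height - level x) x"

definition "layered E \<longleftrightarrow> (\<forall>r. E r \<subseteq> TW \<times> TW) \<and>
  (\<forall>r x y. (x, y) \<in> E r \<longrightarrow> level x < level y) \<and> (\<forall>x. finite (succs E x))"

lemma level_less_height: "x \<in> TW \<Longrightarrow> level x < height"
  unfolding height_def using finite_TW by (simp add: le_imp_less_Suc)

lemma layered_TR: "layered TR"
  unfolding layered_def using TR_sub TR_level finite_succs_TR by auto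

lemma le_greatest_lab_fuel_Suc:
  assumes "finite (succs E x)"
  shows "c \<le> greatest_lab_fuel D a E (Suc n) x \<longleftrightarrow> (\<forall>q. x \<in> TV q \<longrightarrow> c \<le> a q) \<and>
    (\<forall>r y. (x, y) \<in> E r \<longrightarrow> c \<le> D r (greatest_lab_fuel D a E n y))"
proof -
  have fin: "finite (insert top
      (a ` {q. x \<in> TV q} \<union> (\<lambda>(r, y). D r (greatest_lab_fuel D a E n y)) ` succs E x))"
    using assms finite_TV_at by simp
  show ?thesis
    unfolding greatest_lab_fuel.simps Inf_fin.bounded_iff[OF fin insert_not_empty]
    by (auto simp: succs_def)
qed

lemma greatest_lab_fuel_Suc_eq:
  assumes "layered E"
  shows "x \<in> TW \<Longrightarrow> height - level x \<le> n \<Longrightarrow>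
    greatest_lab_fuel D a E (Suc n) x = greatest_lab_fuel D a E n x"
proof (induction n arbitrary: x)
  case 0
  then show ?case
    using level_less_height by fastforce
next
  case (Suc n)
  have "greatest_lab_fuel D a E (Suc n) y = greatest_lab_fuel D a E n y" if "(x, y) \<in> E r" for r y
  proof -
    have "y \<in> TW" "level x < level y"
      using assms that unfolding layered_def by blast+
    then show ?thesis
      using Suc by simp
  qed
  then have "(\<lambda>(r, y). D r (greatest_lab_fuel D a E (Suc n) y)) ` succs E x =
      (\<lambda>(r, y). D r (greatest_lab_fuel D a E n y)) ` succs E x"
    by (intro image_cong) (auto simp: succs_def)
  then show ?case
    by (simp only: greatest_lab_fuel.simps)
qed

lemma greatest_lab_fuel_eq:
  assumes "layered E" "x \<in> TW" "height - level x \<le> m"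
  shows "greatest_lab_fuel D a E m x = greatest_lab D a E x"
  using assms(3)
proof (induction rule: dec_induct)
  case base
  show ?case
    unfolding greatest_lab_def ..
next
  case (step n)
  have "greatest_lab_fuel D a E (Suc n) x = greatest_lab_fuel D a E n x"
    using greatest_lab_fuel_Suc_eq[OF assms(1,2) step(1)] .
  then show ?case
    using step.IH by (rule trans)
qed

lemma le_greatest_lab_iff:
  assumes "layered E" "x \<in> TW"
  shows "c \<le> greatest_lab D a E x \<longleftrightarrow> (\<forall>q. x \<in> TV q \<longrightarrow> c \<le> a q) \<and>
    (\<forall>r y. (x, y) \<in> E r \<longrightarrow> c \<le> D r (greatest_lab D a E y))"
proof -
  have fuel: "height - level x = Suc (height - Suc (level x))"
    using level_less_height[OF assms(2)] by simp
  have eq: "greatest_lab_fuel D a E (height - Suc (level x)) y = greatest_lab D a E y"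
    if "(x, y) \<in> E r" for r y
  proof (rule greatest_lab_fuel_eq[OF assms(1)])
    have "y \<in> TW \<and> Suc (level x) \<le> level y"
      using assms(1) that unfolding layered_def by (auto simp: Suc_le_eq)
    then show "y \<in> TW" "height - level y \<le> height - Suc (level x)"
      by (simp_all add: diff_le_mono2)
  qed
  have fin: "finite (succs E x)"
    using assms(1) unfolding layered_def by blast
  show ?thesis
    unfolding greatest_lab_def[of D a E x] fuel le_greatest_lab_fuel_Suc[OF fin] using eq by auto
qed

lemma coherent_greatest_lab: "layered E \<Longrightarrow> coherent D a UNIV TV E (greatest_lab D a E)"
  unfolding coherent_def
  using le_greatest_lab_iff[THEN iffD1, OF _ _ order_refl] TV_sub
  by (metis layered_def mem_Sigma_iff subset_eq)

lemma le_greatest_lab: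
  assumes "layered E" "\<forall>r. mono (D r)" "coherent D a UNIV TV E c"
  shows "c x \<le> greatest_lab D a E x"
proof -
  have "c x \<le> greatest_lab_fuel D a E n x" for n
  proof (induction n arbitrary: x)
    case (Suc n)
    have "c x \<le> D r (greatest_lab_fuel D a E n y)" if "(x, y) \<in> E r" for r y
    proof -
      have "c x \<le> D r (c y)"
        using assms(3) that unfolding coherent_def by blast
      also have "\<dots> \<le> D r (greatest_lab_fuel D a E n y)"
        using assms(2) Suc.IH by (simp add: monoD)
      finally show ?thesis .
    qed
    moreover have "finite (succs E x)"
      using assms(1) unfolding layered_def by blast
    ultimately show ?case
      using le_greatest_lab_fuel_Suc assms(3) unfolding coherent_def by blast
  qed simp
  then show ?thesis
    unfolding greatest_lab_def by blast
qed

lemma TR_path_level: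
  assumes "\<forall>i<k. (z i, z (Suc i)) \<in> TR (rs i)" "i \<le> k"
  shows "level (z i) = level (z 0) + i"
  using assms(2)
proof (induction i)
  case (Suc i)
  then have "(z i, z (Suc i)) \<in> TR (rs i)"
    using assms(1) by simp
  then show ?case
    using Suc TR_level by simp
qed simp

lemma TR_path_inj:
  assumes "\<forall>i<k. (z i, z (Suc i)) \<in> TR (rs i)" "i \<le> k" "j \<le> k" "z i = z j"
  shows "i = j"
proof -
  have "level (z 0) + i = level (z 0) + j"
    using TR_path_level[OF assms(1,2)] TR_path_level[OF assms(1,3)] assms(4) by metis
  then show ?thesis
    by simp
qed

lemma TR_path_level_le_last:
  assumes "\<forall>i<k. (z i, z (Suc i)) \<in> TR (rs i)" "i \<le> k"
  shows "level (z i) \<le> level (z k)"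
  using TR_path_level[OF assms] TR_path_level[OF assms(1) order_refl] assms(2) by linarith

text \<open>The edges of \<open>E\<close> outside the tree start at level at least \<open>level s\<close>, so they cannot end on a
  tree path leading to \<open>s\<close>; the only edge into a node of that path comes from its predecessor.\<close>

lemma TR_path_only_parent:
  assumes lay: "layered E" and path: "\<forall>i<k. (z i, z (Suc i)) \<in> TR (rs i)" and zk: "z k = s"
    and below: "\<forall>r x y. (x, y) \<in> E r \<longrightarrow> (x, y) \<notin> TR r \<longrightarrow> level s \<le> level x"
    and xy: "(x, z (Suc j)) \<in> E r" and j: "j < k"
  shows "x = z j \<and> r = rs j"
proof -
  have "(x, z (Suc j)) \<in> TR r"
  proof (rule ccontr)
    assume "(x, z (Suc j)) \<notin> TR r"
    then have "level s \<le> level x"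
      using below xy by blast
    moreover have "level x < level (z (Suc j))"
      using lay xy unfolding layered_def by blast
    ultimately show False
      using TR_path_level_le_last[OF path, of "Suc j"] j zk by simp
  qed
  moreover have "(z j, z (Suc j)) \<in> TR (rs j)"
    using path j by blast
  ultimately show ?thesis
    using TR_parent_unique by blast
qed

end

definition patch :: "(nat \<Rightarrow> 'b) \<Rightarrow> nat \<Rightarrow> (nat \<Rightarrow> 'a) \<Rightarrow> ('b \<Rightarrow> 'a) \<Rightarrow> 'b \<Rightarrow> 'a" where
  "patch z k m c y = (if \<exists>i\<le>k. z i = y then m (THE i. i \<le> k \<and> z i = y) else c y)"

lemma patch_off: "\<forall>i\<le>k. z i \<noteq> y \<Longrightarrow> patch z k m c y = c y"
  unfolding patch_def by auto

context syntax_tree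
begin

lemma patch_TR_path:
  assumes path: "\<forall>i<k. (z i, z (Suc i)) \<in> TR (rs i)" and "i \<le> k"
  shows "patch z k m c (z i) = m i"
proof -
  have "(THE j. j \<le> k \<and> z j = z i) = i"
    by (rule the_equality) (use assms TR_path_inj[OF path] in auto)
  then show ?thesis
    unfolding patch_def using assms(2) by auto
qed

lemma patch_\<rho>:
  assumes path: "\<forall>i<k. (z i, z (Suc i)) \<in> TR (rs i)" and m0: "m 0 = c (z 0)"
  shows "patch z k m c \<rho> = c \<rho>"
proof (cases "\<exists>i\<le>k. z i = \<rho>")
  case True
  then obtain i where i: "i \<le> k" "z i = \<rho>"
    by blast
  then have "i = 0"
    using TR_path_level[OF path i(1)] by (simp add: \<rho>_def)
  moreover have "patch z k m c (z 0) = m 0"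
    using patch_TR_path[OF path, of 0] by simp
  ultimately show ?thesis
    using i m0 by simp
qed (simp add: patch_off)

lemma coherent_patch:
  assumes lay: "layered E" and coh: "coherent D a UNIV TV E c"
    and path: "\<forall>i<k. (z i, z (Suc i)) \<in> TR (rs i)" and zk: "z k = s" and st: "level s < level t"
    and m0: "m 0 = c (z 0)" and m_le: "\<forall>i\<le>k. m i \<le> c (z i)"
    and m_step: "\<forall>i<k. m i \<le> D (rs i) (m (Suc i))" and mk: "m k \<le> D S (c t)"
    and below: "\<forall>r x y. (x, y) \<in> E r \<longrightarrow> (x, y) \<notin> TR r \<longrightarrow> level s \<le> level x"
  shows "coherent D a UNIV TV (E(S := insert (s, t) (E S))) (patch z k m c)"
proof -
  let ?e = "patch z k m c"
  have e_le: "?e y \<le> c y" for y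
  proof (cases "\<exists>i\<le>k. z i = y")
    case True
    then obtain i where "i \<le> k" "y = z i"
      by auto
    moreover have "m i \<le> c (z i)"
      using m_le \<open>i \<le> k\<close> by blast
    ultimately show ?thesis
      using patch_TR_path[OF path \<open>i \<le> k\<close>, of m c] \<open>y = z i\<close> by metis
  qed (simp add: patch_off)
  have c_E: "c x \<le> D r (c y)" if "(x, y) \<in> E r" for r x y
    using coh that unfolding coherent_def by blast
  have e_E: "?e x \<le> D r (?e y)" if xy: "(x, y) \<in> E r" for r x y
  proof (cases "\<exists>j<k. z (Suc j) = y")
    case True
    then obtain j where j: "j < k" "y = z (Suc j)"
      by auto
    then have "x = z j" "r = rs j"
      using TR_path_only_parent[OF lay path zk below] xy by blast+
    then show ?thesis
      using j m_step patch_TR_path[OF path, of j m c] patch_TR_path[OF path, of "Suc j" m c] by simp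
  next
    case not_inner: False
    have "?e y = c y"
    proof (cases "y = z 0")
      case True
      then show ?thesis
        using patch_TR_path[OF path, of 0 m c] m0 by simp
    next
      case False
      then have "\<forall>i\<le>k. z i \<noteq> y"
        using not_inner by (metis Suc_le_lessD not0_implies_Suc)
      then show ?thesis
        by (rule patch_off)
    qed
    then show ?thesis
      using e_le[of x] c_E[OF xy] by (metis order_trans)
  qed
  have "\<forall>i\<le>k. z i \<noteq> t"
    using TR_path_level_le_last[OF path] zk st by (metis leD)
  then have e_new: "?e s \<le> D S (?e t)"
    using patch_TR_path[OF path order_refl] zk mk patch_off by metis
  show ?thesis
    unfolding coherent_def
  proof (intro conjI ballI allI impI)
    show "?e x \<le> a q" if "x \<in> TV q" for q x
      using e_le[of x] coh that unfolding coherent_def by (blast intro: order_trans)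
    show "?e x \<le> D r (?e y)" if "(x, y) \<in> (E(S := insert (s, t) (E S))) r" for r x y
      using that e_E e_new by (auto split: if_splits)
  qed
qed

end

section \<open>Closing the tree model under the profiles\<close>

locale tree_closure = syntax_tree \<sigma> for \<sigma> :: "'r spf" +
  fixes \<Pi> :: "'r profile set"
  assumes fl_tree_profiles: "\<forall>\<pi>\<in>\<Pi>. tree_profile \<pi> \<and> forward_looking \<pi>"
    and stable: "stable \<Pi>"
begin

definition "new_edges r = {(h (pu \<pi>), h (pv \<pi>)) | \<pi> h.
  \<pi> \<in> \<Pi> \<and> pS \<pi> = r \<and> is_hom (pdom \<pi>) (prel \<pi>) TW TR h}"

text \<open>This is \<open>\<Pi>(T\<^sub>\<sigma>)\<close>: by stability a homomorphism into it is one into \<open>T\<^sub>\<sigma>\<close>, so a single round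
  of new edges already satisfies every \<open>\<Phi>\<^sub>\<pi>\<close>.\<close>

definition "TR_closed r = TR r \<union> new_edges r"

lemma fl_tree_profile: "\<pi> \<in> \<Pi> \<Longrightarrow> fl_tree_profile \<pi>"
  using fl_tree_profiles unfolding fl_tree_profile_def by blast

lemma hom_level_less:
  assumes "is_hom (pdom \<pi>) (prel \<pi>) TW TR h"
  shows "(x, y) \<in> (edges (prel \<pi>))\<^sup>+ \<Longrightarrow> level (h x) < level (h y)"
proof (induction rule: trancl_induct)
  case (base y)
  then obtain r where "(h x, h y) \<in> TR r"
    using assms unfolding is_hom_def edges_def by blast
  then show ?case
    using TR_level by simp
next
  case (step y z)
  then obtain r where "(h y, h z) \<in> TR r"
    using assms unfolding is_hom_def edges_def by blast
  then show ?case
    using TR_level step.IH by simp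
qed

lemma new_edge_level: "(x, y) \<in> new_edges r \<Longrightarrow> x \<in> TW \<and> y \<in> TW \<and> level x < level y"
proof -
  assume "(x, y) \<in> new_edges r"
  then obtain \<pi> h where \<pi>: "\<pi> \<in> \<Pi>" "x = h (pu \<pi>)" "y = h (pv \<pi>)"
      and hom: "is_hom (pdom \<pi>) (prel \<pi>) TW TR h"
    unfolding new_edges_def by blast
  interpret P: fl_tree_profile \<pi>
    using fl_tree_profile \<pi>(1) .
  show ?thesis
    using \<pi> hom P.uv hom_level_less[OF hom P.u_trancl_v] unfolding is_hom_def by auto
qed

lemma TR_closed_sub_Pi_closure: "TR_closed r \<subseteq> Pi_closure \<Pi> TW TR r"
  unfolding Pi_closure_def
proof (intro subsetI InterI)
  fix e X
  assume e: "e \<in> TR_closed r"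
    and "X \<in> {R' r |R'. is_frame TW R' \<and> (\<forall>s. TR s \<subseteq> R' s) \<and> (\<forall>\<pi>\<in>\<Pi>. sat_Phi \<pi> TW R')}"
  then obtain R' where R': "X = R' r" "\<forall>s. TR s \<subseteq> R' s" "\<forall>\<pi>\<in>\<Pi>. sat_Phi \<pi> TW R'"
    by blast
  show "e \<in> X"
  proof (cases "e \<in> TR r")
    case False
    then obtain \<pi> h where \<pi>: "\<pi> \<in> \<Pi>" "pS \<pi> = r" "e = (h (pu \<pi>), h (pv \<pi>))"
        and hom: "is_hom (pdom \<pi>) (prel \<pi>) TW TR h"
      using e unfolding TR_closed_def new_edges_def by blast
    have "sat_Phi \<pi> TW R'"
      using R'(3) \<pi>(1) by blast
    then show ?thesis
      using hom R'(1,2) \<pi>(2,3) unfolding sat_Phi_def is_hom_def by blast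
  qed (use R' in blast)
qed

lemma is_frame_TR_closed: "is_frame TW TR_closed"
  unfolding is_frame_def TR_closed_def using TR_sub new_edge_level by fast

lemma sat_Phi_TR_closed: "\<pi> \<in> \<Pi> \<Longrightarrow> sat_Phi \<pi> TW TR_closed"
  unfolding sat_Phi_def
proof (intro allI impI)
  fix h
  assume \<pi>: "\<pi> \<in> \<Pi>" and hW: "\<forall>x\<in>pdom \<pi>. h x \<in> TW"
    and hR: "\<forall>r x y. (x, y) \<in> prel \<pi> r \<longrightarrow> (h x, h y) \<in> TR_closed r"
  have "is_hom (pdom \<pi>) (prel \<pi>) TW (Pi_closure \<Pi> TW TR) h"
    unfolding is_hom_def using hW hR TR_closed_sub_Pi_closure by blast
  then have "is_hom (pdom \<pi>) (prel \<pi>) TW TR h"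
    using stable \<pi> is_tree_T unfolding stable_def by blast
  then show "(h (pu \<pi>), h (pv \<pi>)) \<in> TR_closed (pS \<pi>)"
    unfolding TR_closed_def new_edges_def using \<pi> by blast
qed

definition "new_triples = {(r, x, y). (x, y) \<in> new_edges r}"
definition "TR_plus N r = TR r \<union> {(x, y). (r, x, y) \<in> N}"

lemma layered_TR_plus: "finite N \<Longrightarrow> N \<subseteq> new_triples \<Longrightarrow> layered (TR_plus N)"
  unfolding layered_def
proof (intro conjI allI impI)
  fix r x y
  assume "N \<subseteq> new_triples"
  then show "TR_plus N r \<subseteq> TW \<times> TW" "(x, y) \<in> TR_plus N r \<Longrightarrow> level x < level y"
    unfolding TR_plus_def new_triples_def using TR_sub TR_level new_edge_level by fastforce+
next
  fix x
  assume "finite N"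
  have "succs (TR_plus N) x \<subseteq> succs TR x \<union> (\<lambda>(r, x, y). (r, y)) ` N"
    unfolding succs_def TR_plus_def by force
  then show "finite (succs (TR_plus N) x)"
    using finite_succs_TR \<open>finite N\<close> by (meson finite_Un finite_imageI finite_subset)
qed

lemma TR_plus_empty: "TR_plus {} = TR"
  unfolding TR_plus_def by simp

lemma TR_plus_insert: "TR_plus (insert (S, s, t) N) = (TR_plus N)(S := insert (s, t) (TR_plus N S))"
  unfolding TR_plus_def by (rule ext) auto

lemma TR_path_labelling_of_new_triple:
  fixes D :: "'r \<Rightarrow> 'a::{semilattice_inf,order_top} \<Rightarrow> 'a"
  assumes mono: "\<forall>r. mono (D r)" and valid: "\<forall>\<pi>\<in>\<Pi>. slo_valid D (iota' \<pi>)"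
    and new: "(S, s, t) \<in> new_triples" and c_TR: "\<And>r x y. (x, y) \<in> TR r \<Longrightarrow> c x \<le> D r (c y)"
  obtains k z rs m where "\<forall>i<k. (z i, z (Suc i)) \<in> TR (rs i)" "z k = s"
    "m 0 = c (z 0)" "\<forall>i\<le>k. m i \<le> c (z i)" "\<forall>i<k. m i \<le> D (rs i) (m (Suc i))" "m k \<le> D S (c t)"
proof -
  obtain \<pi> h where \<pi>: "\<pi> \<in> \<Pi>" "pS \<pi> = S" "s = h (pu \<pi>)" "t = h (pv \<pi>)"
      and hom: "is_hom (pdom \<pi>) (prel \<pi>) TW TR h"
    using new unfolding new_triples_def new_edges_def by blast
  interpret P: fl_tree_profile \<pi>
    using fl_tree_profile \<pi>(1) .
  have hTR: "(h x, h y) \<in> TR r" if "(x, y) \<in> P.G r" for r x y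
    using hom that unfolding is_hom_def by blast
  obtain k f rs m where f: "f 0 = P.root" "f k = P.u" "\<forall>i<k. (f i, f (Suc i)) \<in> P.G (rs i)"
      and m: "c (h P.root) \<le> m 0" "\<forall>i\<le>k. m i \<le> c (h (f i))"
        "\<forall>i<k. m i \<le> D (rs i) (m (Suc i))" "m k \<le> D P.S (c (h P.v))"
    by (rule P.path_labelling_of_slo_valid[where b = "\<lambda>x. c (h x)",
          OF mono valid[rule_format, OF \<pi>(1)] c_TR[OF hTR]]) blast
  show ?thesis
  proof (rule that)
    show "\<forall>i<k. (h (f i), h (f (Suc i))) \<in> TR (rs i)"
      using f(3) hTR by blast
    show "h (f k) = s"
      using f(2) \<pi>(3) by simp
    show "m 0 = c (h (f 0))"
      using m(1) m(2)[rule_format, of 0] f(1) by (simp add: order_antisym)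
  qed (use m(2-4) \<pi>(2,4) in simp_all)
qed

lemma greatest_lab_\<rho>_le_insert:
  fixes D :: "'r \<Rightarrow> 'a::{semilattice_inf,order_top} \<Rightarrow> 'a"
  assumes mono: "\<forall>r. mono (D r)" and valid: "\<forall>\<pi>\<in>\<Pi>. slo_valid D (iota' \<pi>)"
    and N: "finite N" "N \<subseteq> new_triples" and new: "(S, s, t) \<in> new_triples"
    and below: "\<forall>(r, x, y)\<in>N. level s \<le> level x"
  shows "greatest_lab D a (TR_plus N) \<rho> \<le> greatest_lab D a (TR_plus (insert (S, s, t) N)) \<rho>"
proof -
  define c where "c = greatest_lab D a (TR_plus N)"
  have lay: "layered (TR_plus N)"
    using layered_TR_plus N .
  have coh: "coherent D a UNIV TV (TR_plus N) c"
    unfolding c_def by (rule coherent_greatest_lab[OF lay])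
  then have "c x \<le> D r (c y)" if "(x, y) \<in> TR r" for r x y
    using that unfolding coherent_def TR_plus_def by blast
  then obtain k z rs m where path: "\<forall>i<k. (z i, z (Suc i)) \<in> TR (rs i)" and zk: "z k = s"
      and m: "m 0 = c (z 0)" "\<forall>i\<le>k. m i \<le> c (z i)" "\<forall>i<k. m i \<le> D (rs i) (m (Suc i))"
        "m k \<le> D S (c t)"
    by (rule TR_path_labelling_of_new_triple[where c = c, OF mono valid new]) blast
  have "level s < level t"
    using new new_edge_level unfolding new_triples_def by blast
  moreover have "\<forall>r x y. (x, y) \<in> TR_plus N r \<longrightarrow> (x, y) \<notin> TR r \<longrightarrow> level s \<le> level x"
    using below unfolding TR_plus_def by blast
  ultimately have "coherent D a UNIV TV (TR_plus (insert (S, s, t) N)) (patch z k m c)"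
    unfolding TR_plus_insert using coherent_patch[OF lay coh path zk _ m] by blast
  moreover have "layered (TR_plus (insert (S, s, t) N))"
    using layered_TR_plus N new by simp
  ultimately have "patch z k m c \<rho> \<le> greatest_lab D a (TR_plus (insert (S, s, t) N)) \<rho>"
    using le_greatest_lab mono by blast
  moreover have "patch z k m c \<rho> = c \<rho>"
    by (rule patch_\<rho>[where k = k and z = z and rs = rs and m = m and c = c, OF path m(1)])
  ultimately show ?thesis
    unfolding c_def by simp
qed

lemma greatest_lab_\<rho>_le_TR_plus:
  fixes D :: "'r \<Rightarrow> 'a::{semilattice_inf,order_top} \<Rightarrow> 'a"
  assumes mono: "\<forall>r. mono (D r)" and valid: "\<forall>\<pi>\<in>\<Pi>. slo_valid D (iota' \<pi>)"
  shows "finite N \<Longrightarrow> N \<subseteq> new_triples \<Longrightarrow> greatest_lab D a TR \<rho> \<le> greatest_lab D a (TR_plus N) \<rho>"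
proof (induction "card N" arbitrary: N rule: less_induct)
  case less
  show ?case
  proof (cases "N = {}")
    case True
    then show ?thesis
      by (simp add: TR_plus_empty)
  next
    case False
    then obtain S s t where min: "(S, s, t) \<in> N" "\<forall>(r, x, y)\<in>N. level s \<le> level x"
      using ex_has_least_nat[of "\<lambda>e. e \<in> N" _ "\<lambda>(r, x, y). level x"] by fastforce
    define N' where "N' = N - {(S, s, t)}"
    have N': "finite N'" "N' \<subseteq> new_triples"
      unfolding N'_def using less.prems by auto
    have "card N' < card N"
      unfolding N'_def by (rule card_Diff1_less[OF less.prems(1) min(1)])
    have "greatest_lab D a TR \<rho> \<le> greatest_lab D a (TR_plus N') \<rho>"
      using less.hyps \<open>card N' < card N\<close> N' by blast
    also have "\<dots> \<le> greatest_lab D a (TR_plus (insert (S, s, t) N')) \<rho>"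
      by (rule greatest_lab_\<rho>_le_insert[OF mono valid N'(1,2)])
        (use less.prems min N'_def in auto)
    also have "insert (S, s, t) N' = N"
      unfolding N'_def using min(1) by blast
    finally show ?thesis .
  qed
qed

lemma \<rho>_in_TW: "\<rho> \<in> TW"
  unfolding TW_def \<rho>_def by simp

lemma frame_valid_Sigma': "\<iota> \<in> Sigma' \<Pi> \<Longrightarrow> frame_valid TW TR_closed \<iota>"
proof -
  assume "\<iota> \<in> Sigma' \<Pi>"
  then obtain \<pi> where \<pi>: "\<pi> \<in> \<Pi>" "\<iota> = iota' \<pi>"
    unfolding Sigma'_def by blast
  interpret P: fl_tree_profile \<pi>
    using fl_tree_profile \<pi>(1) .
  show ?thesis
    unfolding \<pi>(2) frame_valid_def
    using P.ksat_snd_iota'_of_sat_Phi[OF sat_Phi_TR_closed[OF \<pi>(1)] is_frame_TR_closed] by blast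
qed

lemma ksat_TR_plus_of_Kr_cons:
  assumes "Kr_cons (Sigma' \<Pi>) (\<sigma>, \<tau>) TYPE(nat)"
  obtains N where "finite N" "N \<subseteq> new_triples" "ksat (TR_plus N) TV \<rho> \<tau>"
proof
  have "frame_valid TW TR_closed (\<sigma>, \<tau>)"
    using assms is_frame_TR_closed frame_valid_Sigma' unfolding Kr_cons_def by blast
  then have "\<forall>w\<in>TW. ksat TR_closed TV w \<sigma> \<longrightarrow> ksat TR_closed TV w \<tau>"
    using TV_sub unfolding frame_valid_def by simp
  moreover have "ksat TR_closed TV \<rho> \<sigma>"
    by (rule ksat_mono[OF _ ksat_\<rho>]) (simp add: TR_closed_def)
  ultimately have sat_\<tau>: "ksat TR_closed TV \<rho> \<tau>"
    using \<rho>_in_TW by blast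
  define N where "N = {(r, x, y). r \<in> dia_rels \<tau> \<and> (x, y) \<in> new_edges r}"
  have "N \<subseteq> dia_rels \<tau> \<times> TW \<times> TW"
    unfolding N_def using new_edge_level by blast
  then show "finite N"
    using finite_dia_rels finite_TW by (meson finite_SigmaI finite_subset)
  show "N \<subseteq> new_triples"
    unfolding N_def new_triples_def by blast
  have "TR_plus N r = TR_closed r" if "r \<in> dia_rels \<tau>" for r
    unfolding TR_plus_def TR_closed_def N_def using that by auto
  then show "ksat (TR_plus N) TV \<rho> \<tau>"
    using ksat_cong[of \<tau> "TR_plus N" TR_closed] sat_\<tau> by blast
qed

lemma SLO_cons_of_Kr_cons:
  assumes "Kr_cons (Sigma' \<Pi>) (\<sigma>, \<tau>) TYPE(nat)"
  shows "SLO_cons (Sigma' \<Pi>) (\<sigma>, \<tau>) TYPE('a::{semilattice_inf,order_top})"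
  unfolding SLO_cons_def slo_valid_def[of _ "(\<sigma>, \<tau>)"] fst_conv snd_conv
proof (intro allI impI)
  fix D :: "'r \<Rightarrow> 'a \<Rightarrow> 'a" and a
  assume mono: "\<forall>r. mono (D r)" and valid: "\<forall>\<iota>\<in>Sigma' \<Pi>. slo_valid D \<iota>"
  then have valid': "\<forall>\<pi>\<in>\<Pi>. slo_valid D (iota' \<pi>)"
    unfolding Sigma'_def by blast
  obtain N where N: "finite N" "N \<subseteq> new_triples" and sat_\<tau>: "ksat (TR_plus N) TV \<rho> \<tau>"
    using ksat_TR_plus_of_Kr_cons[OF assms] by blast
  have "slo_eval D a \<sigma> = subformula_value D a \<rho>"
    by (simp add: subformula_value_\<rho>)
  also have "\<dots> \<le> greatest_lab D a TR \<rho>"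
    by (rule le_greatest_lab[OF layered_TR mono coherent_subformula_value])
  also have "\<dots> \<le> greatest_lab D a (TR_plus N) \<rho>"
    by (rule greatest_lab_\<rho>_le_TR_plus[OF mono valid' N])
  also have "\<dots> \<le> slo_eval D a \<tau>"
    by (rule coherent_le_slo_eval[OF coherent_greatest_lab[OF layered_TR_plus[OF N]] mono sat_\<tau>])
  finally show "slo_eval D a \<sigma> \<le> slo_eval D a \<tau>" .
qed

end

section \<open>Completeness\<close>

text \<open>Frame validity of \<open>\<iota>'\<^sub>\<pi>\<close> only constrains valuations into the frame; passing through
  \<open>\<Phi>\<^sub>\<pi>\<close> gives validity in the complex algebra.\<close>

lemma Kr_cons_of_SLO_cons:
  assumes "\<forall>\<pi>\<in>\<Pi>. tree_profile \<pi> \<and> forward_looking \<pi>" and "SLO_cons (Sigma' \<Pi>) \<iota> TYPE('w set)"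
  shows "Kr_cons (Sigma' \<Pi>) \<iota> TYPE('w)"
  unfolding Kr_cons_def
proof (intro allI impI)
  fix W :: "'w set" and R
  assume frame: "is_frame W R" and valid: "\<forall>\<iota>\<in>Sigma' \<Pi>. frame_valid W R \<iota>"
  define D where "D r X = {w. \<exists>v\<in>X. (w, v) \<in> R r}" for r X
  have eval: "slo_eval D V \<phi> = {w. ksat R V w \<phi>}" for V \<phi>
    unfolding D_def by (rule slo_eval_complex_algebra)
  have "slo_valid D \<iota>'" if \<iota>': "\<iota>' \<in> Sigma' \<Pi>" for \<iota>'
  proof -
    obtain \<pi> where \<pi>: "\<pi> \<in> \<Pi>" "\<iota>' = iota' \<pi>"
      using \<iota>' unfolding Sigma'_def by blast
    interpret P: fl_tree_profile \<pi>
      using assms(1) \<pi>(1) unfolding fl_tree_profile_def by blast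
    have "sat_Phi \<pi> W R"
      using P.sat_Phi_of_frame_valid valid \<iota>' \<pi>(2) by blast
    then show ?thesis
      unfolding \<pi>(2) slo_valid_def eval using P.ksat_snd_iota'_of_sat_Phi[OF _ frame] by blast
  qed
  moreover have "\<forall>r. mono (D r)"
    unfolding D_def mono_def by blast
  ultimately have "slo_valid D \<iota>"
    using assms(2) unfolding SLO_cons_def by blast
  then show "frame_valid W R \<iota>"
    unfolding frame_valid_def slo_valid_def eval by blast
qed

theorem theorem5p10:
  fixes \<Pi> :: "'r profile set"
  assumes "\<forall>\<pi>\<in>\<Pi>. tree_profile \<pi> \<and> forward_looking \<pi>"
    and "stable \<Pi>"
  shows "spi_complete (Sigma' \<Pi>) TYPE('a::{semilattice_inf,order_top}) TYPE('w)"
  unfolding spi_complete_def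
proof (intro conjI allI impI)
  fix \<iota> :: "'r spi"
  assume Kr: "Kr_cons (Sigma' \<Pi>) \<iota> TYPE(nat)"
  obtain \<sigma> \<tau> where \<iota>: "\<iota> = (\<sigma>, \<tau>)"
    by fastforce
  interpret tree_closure \<sigma> \<Pi>
    using assms by unfold_locales
  show "SLO_cons (Sigma' \<Pi>) \<iota> TYPE('a)"
    using SLO_cons_of_Kr_cons Kr unfolding \<iota> by blast
next
  fix \<iota> :: "'r spi"
  assume "SLO_cons (Sigma' \<Pi>) \<iota> TYPE('w set)"
  then show "Kr_cons (Sigma' \<Pi>) \<iota> TYPE('w)"
    using Kr_cons_of_SLO_cons assms(1) by blast
qed

end
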